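(* Suppose that $\Re s=1$, $u\ge1$, and $|s|>u$. For integers $\nu\ge1$, \[ \left|\frac{\partial^{\nu}}{\partial u^{\nu}}G(u,s)\right|\ll_{\nu}\frac{|s|^{\nu-1}}{u^{2\nu-1}}, \] with implied constant depending only on $\nu$.
   Context: $G(u,s):=\int_{0}^{1/u}\frac{1-e^{-ts}}{t}\,dt$. *)

theory Defs
  imports "HOL-Analysis.Analysis"
begin

text \<open>G(u,s) = integral from 0 to 1/u of (1 - exp(-t s))/t dt (Henstock-Kurzweil integral,
  complex valued; the integrand at t = 0 is irrelevant).\<close>
definition G :: "real \<Rightarrow> complex \<Rightarrow> complex" where
  "G u s = integral {0..1/u} (\<lambda>t. (1 - exp (- (complex_of_real t * s))) / complex_of_real t)"

fun higher_vderiv :: "nat \<Rightarrow> (real \<Rightarrow> 'a::real_normed_vector) \<Rightarrow> real \<Rightarrow> 'a" where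
  "higher_vderiv 0 f = f"
| "higher_vderiv (Suc n) f = (\<lambda>u. vector_derivative (higher_vderiv n f) (at u))"

end

theory Submission imports Defs begin

text \<open>
  Substituting b = 1/u, G(u,s) is the integral of the continuous kernel (1 - e^{-ts})/t over
  [0,b], so \<partial>G/\<partial>u = (e^{-s/u} - 1)/u.  Differentiating further in u only ever produces
  terms c/u^{k+1} and s^j e^{-s/u}/u^{k+1+j} with j \<le> k, so the \<nu>-th derivative (k = \<nu> - 1)
  is a fixed linear combination of them.  For Re s \<ge> 0 one has |e^{-s/u}| \<le> 1, and
  |s|^j/u^{k+1+j} \<le> |s|^k/u^{2k+1} as soon as u \<le> |s|.
\<close>

lemma higher_vderiv_Suc_eqI:
  assumes "open S" "u \<in> S" "\<And>x. x \<in> S \<Longrightarrow> higher_vderiv k f x = F x"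
    and "(F has_vector_derivative F') (at u)"
  shows "higher_vderiv (Suc k) f u = F'"
proof -
  have "eventually (\<lambda>x. x \<in> UNIV \<longrightarrow> higher_vderiv k f x = F x) (nhds u)"
    using eventually_nhds_in_open[OF assms(1,2)] by (rule eventually_mono) (use assms(3) in auto)
  then have "vector_derivative (higher_vderiv k f) (at u) = vector_derivative F (at u)"
    by (rule vector_derivative_cong_eq) auto
  then show ?thesis
    using vector_derivative_at[OF assms(4)] by simp
qed

definition G_kernel :: "complex \<Rightarrow> complex \<Rightarrow> complex" where
  "G_kernel s z = (if z = 0 then s else (1 - exp (- (z * s))) / z)"

lemma isCont_G_kernel: "isCont (G_kernel s) z"
proof (cases "z = 0")
  case True
  have "((\<lambda>z. exp (- (z * s))) has_field_derivative - s) (at 0)"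
    by (auto intro!: derivative_eq_intros)
  then have "((\<lambda>y. (exp (- (y * s)) - 1) / y) \<longlongrightarrow> - s) (at 0)"
    by (simp add: has_field_derivative_iff)
  then have "((\<lambda>y. - ((exp (- (y * s)) - 1) / y)) \<longlongrightarrow> s) (at 0)"
    using tendsto_minus by fastforce
  then have "((\<lambda>y. (1 - exp (- (y * s))) / y) \<longlongrightarrow> s) (at 0)"
    by (simp add: minus_divide_left)
  then have "(G_kernel s \<longlongrightarrow> s) (at 0)"
    by (rule tendsto_cong[THEN iffD1, rotated]) (auto simp: G_kernel_def eventually_at_filter)
  then show ?thesis
    using True by (simp add: isCont_def G_kernel_def)
next
  case False
  have "eventually (\<lambda>y. y \<noteq> 0) (nhds z)"
    using eventually_nhds_in_open[of "-{0}" z] False by auto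
  then have "eventually (\<lambda>y. G_kernel s y = (1 - exp (- (y * s))) / y) (nhds z)"
    by (rule eventually_mono) (simp add: G_kernel_def)
  moreover have "isCont (\<lambda>y. (1 - exp (- (y * s))) / y) z"
    using False by (auto intro!: continuous_intros)
  ultimately show ?thesis
    using isCont_cong[of "G_kernel s" _ z] by simp
qed

lemma G_eq_integral_G_kernel: "G u s = integral {0..1/u} (\<lambda>t. G_kernel s (of_real t))"
  unfolding G_def by (rule integral_spike[of "{0}"]) (auto simp: G_kernel_def)

lemma has_vector_derivative_integral_G_kernel:
  assumes "b > 0"
  shows "((\<lambda>b. integral {0..b} (\<lambda>t. G_kernel s (of_real t)))
           has_vector_derivative G_kernel s (of_real b)) (at b)"
proof -
  have "continuous_on {0..b+1} (\<lambda>t. G_kernel s (of_real t))"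
    by (intro continuous_at_imp_continuous_on ballI isCont_o2[OF _ isCont_G_kernel])
       (auto intro: continuous_intros)
  moreover have "at b within {0..b+1} = at b"
    using assms by (intro at_within_interior) simp
  ultimately show ?thesis
    using integral_has_vector_derivative[of 0 "b+1" _ b] assms by fastforce
qed

lemma G_has_vector_derivative:
  assumes "u > 0"
  shows "((\<lambda>x. G x s) has_vector_derivative (exp (- s / of_real u) - 1) / of_real u) (at u)"
proof -
  have inv: "((\<lambda>x. 1 / x) has_vector_derivative - 1 / u\<^sup>2) (at u)"
    using assms by (auto intro!: derivative_eq_intros
        simp: has_real_derivative_iff_has_vector_derivative[symmetric] power2_eq_square)
  have "(((\<lambda>b. integral {0..b} (\<lambda>t. G_kernel s (of_real t))) \<circ> (\<lambda>x. 1 / x))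
      has_vector_derivative (- 1 / u\<^sup>2) *\<^sub>R G_kernel s (of_real (1/u))) (at u)"
    using assms by (intro vector_diff_chain_at[OF inv] has_vector_derivative_integral_G_kernel) simp
  moreover have "(- 1 / u\<^sup>2) *\<^sub>R G_kernel s (of_real (1/u)) = (exp (- s / of_real u) - 1) / of_real u"
  proof -
    have "- (complex_of_real (1/u) * s) = - s / of_real u"
      by (simp add: field_simps)
    then show ?thesis
      using assms by (simp add: G_kernel_def scaleR_conv_of_real power2_eq_square field_simps)
  qed
  ultimately have "(((\<lambda>b. integral {0..b} (\<lambda>t. G_kernel s (of_real t))) \<circ> (\<lambda>x. 1 / x))
      has_vector_derivative (exp (- s / of_real u) - 1) / of_real u) (at u)"
    by simp
  then show ?thesis
    by (rule has_vector_derivative_transform_within_open[of _ _ _ "{0<..}"])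
       (use assms in \<open>auto simp: G_eq_integral_G_kernel\<close>)
qed

definition exp_term :: "nat \<Rightarrow> nat \<Rightarrow> complex \<Rightarrow> complex \<Rightarrow> complex" where
  "exp_term m j s z = s ^ j * exp (- s / z) / z ^ m"

lemma exp_term_has_field_derivative:
  assumes "z \<noteq> 0"
  shows "(exp_term m j s has_field_derivative
           exp_term (m + 2) (Suc j) s z - of_nat m * exp_term (Suc m) j s z) (at z)"
proof -
  have "(exp_term m j s has_field_derivative
      (s ^ j * (exp (- s / z) * (s / z\<^sup>2)) * z ^ m - s ^ j * exp (- s / z) * (of_nat m * z ^ (m - 1)))
        / (z ^ m * z ^ m)) (at z)"
    unfolding exp_term_def[abs_def] using assms
    by (auto intro!: derivative_eq_intros simp: power2_eq_square field_simps)
  moreover have "(s ^ j * (exp (- s / z) * (s / z\<^sup>2)) * z ^ m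
        - s ^ j * exp (- s / z) * (of_nat m * z ^ (m - 1))) / (z ^ m * z ^ m)
      = exp_term (m + 2) (Suc j) s z - of_nat m * exp_term (Suc m) j s z"
    using assms by (cases m) (simp_all add: exp_term_def field_simps power2_eq_square)
  ultimately show ?thesis by simp
qed

definition exp_poly :: "real \<Rightarrow> (nat \<Rightarrow> real) \<Rightarrow> nat \<Rightarrow> complex \<Rightarrow> complex \<Rightarrow> complex" where
  "exp_poly c a k s z = of_real c / z ^ (k + 1) + (\<Sum>j\<le>k. of_real (a j) * exp_term (k + 1 + j) j s z)"

lemma exp_poly_has_field_derivative:
  assumes "z \<noteq> 0"
  shows "(exp_poly c a k s has_field_derivative
     exp_poly (- real (k + 1) * c)
       (\<lambda>j. (if j = 0 then 0 else a (j - 1)) - (if j \<le> k then real (k + 1 + j) * a j else 0))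
       (Suc k) s z) (at z)"
proof -
  have "((\<lambda>z. of_real c / z ^ (k + 1)) has_field_derivative
      of_real c * - of_nat (k + 1) / z ^ (k + 2)) (at z)"
    using assms by (auto intro!: derivative_eq_intros simp: field_simps power2_eq_square)
      (metis Suc_pred power_Suc)
  moreover have "((\<lambda>z. \<Sum>j\<le>k. of_real (a j) * exp_term (k + 1 + j) j s z) has_field_derivative
      (\<Sum>j\<le>k. of_real (a j) * (exp_term (k + 1 + j + 2) (Suc j) s z
        - of_nat (k + 1 + j) * exp_term (Suc (k + 1 + j)) j s z))) (at z)"
    by (intro DERIV_sum DERIV_cmult exp_term_has_field_derivative assms)
  ultimately have "(exp_poly c a k s has_field_derivative
      of_real c * - of_nat (k + 1) / z ^ (k + 2)
      + (\<Sum>j\<le>k. of_real (a j) * (exp_term (k + 1 + j + 2) (Suc j) s z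
        - of_nat (k + 1 + j) * exp_term (Suc (k + 1 + j)) j s z))) (at z)"
    unfolding exp_poly_def[abs_def] by (rule DERIV_add)
  moreover
  have shifted: "(\<Sum>j\<le>Suc k. of_real (if j = 0 then 0 else a (j - 1)) * exp_term (Suc k + 1 + j) j s z)
      = (\<Sum>j\<le>k. of_real (a j) * exp_term (k + 1 + j + 2) (Suc j) s z)"
    by (subst sum.atMost_Suc_shift) simp
  have truncated: "(\<Sum>j\<le>Suc k. of_real (if j \<le> k then real (k + 1 + j) * a j else 0)
        * exp_term (Suc k + 1 + j) j s z)
      = (\<Sum>j\<le>k. of_real (a j) * (of_nat (k + 1 + j) * exp_term (Suc (k + 1 + j)) j s z))"
    by (subst sum.atMost_Suc) (auto intro!: sum.cong)
  have "of_real c * - of_nat (k + 1) / z ^ (k + 2)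
      + (\<Sum>j\<le>k. of_real (a j) * (exp_term (k + 1 + j + 2) (Suc j) s z
        - of_nat (k + 1 + j) * exp_term (Suc (k + 1 + j)) j s z))
    = exp_poly (- real (k + 1) * c)
       (\<lambda>j. (if j = 0 then 0 else a (j - 1)) - (if j \<le> k then real (k + 1 + j) * a j else 0))
       (Suc k) s z"
    unfolding exp_poly_def of_real_diff ring_distribs sum_subtractf shifted truncated sum.distrib
    by (simp add: field_simps)
  ultimately show ?thesis by simp
qed

lemma higher_vderiv_G_eq_exp_poly:
  "\<exists>c a. \<forall>s u. u > 0 \<longrightarrow> higher_vderiv (Suc k) (\<lambda>x. G x s) u = exp_poly c a k s (of_real u)"
proof (induction k)
  case 0
  have "higher_vderiv (Suc 0) (\<lambda>x. G x s) u = exp_poly (- 1) (\<lambda>_. 1) 0 s (of_real u)" if "u > 0" for s u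
    using vector_derivative_at[OF G_has_vector_derivative[OF that]] that
    by (simp add: exp_poly_def exp_term_def field_simps)
  then show ?case by blast
next
  case (Suc k)
  then obtain c a where ca: "\<And>s u. u > 0 \<Longrightarrow>
      higher_vderiv (Suc k) (\<lambda>x. G x s) u = exp_poly c a k s (of_real u)"
    by blast
  have "higher_vderiv (Suc (Suc k)) (\<lambda>x. G x s) u = exp_poly (- real (k + 1) * c)
       (\<lambda>j. (if j = 0 then 0 else a (j - 1)) - (if j \<le> k then real (k + 1 + j) * a j else 0))
       (Suc k) s (of_real u)" if "u > 0" for s u
  proof (rule higher_vderiv_Suc_eqI[of "{0<..}"])
    show "((\<lambda>x. exp_poly c a k s (of_real x)) has_vector_derivative exp_poly (- real (k + 1) * c)
       (\<lambda>j. (if j = 0 then 0 else a (j - 1)) - (if j \<le> k then real (k + 1 + j) * a j else 0))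
       (Suc k) s (of_real u)) (at u)"
      by (rule has_vector_derivative_real_field, rule exp_poly_has_field_derivative) (use that in simp)
  qed (use that ca in auto)
  then show ?case by blast
qed

lemma power_div_power_mono:
  fixes S u :: "'a::linordered_field"
  assumes "0 < u" "u \<le> S" "j \<le> k"
  shows "S ^ j / u ^ (k + 1 + j) \<le> S ^ k / u ^ (2 * k + 1)"
proof -
  have "S ^ j / u ^ (k + 1 + j) * 1 \<le> S ^ j / u ^ (k + 1 + j) * (S / u) ^ (k - j)"
    using assms by (intro mult_left_mono one_le_power) (simp_all add: field_simps)
  also have "\<dots> = S ^ k / u ^ (2 * k + 1)"
  proof -
    have "S ^ j * S ^ (k - j) = S ^ k" "u ^ (k + 1 + j) * u ^ (k - j) = u ^ (2 * k + 1)"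
      using assms by (simp_all flip: power_add add: mult_2)
    then show ?thesis by (simp add: power_divide field_simps)
  qed
  finally show ?thesis by simp
qed

lemma norm_exp_term_le:
  assumes "u > 0" "Re s \<ge> 0"
  shows "cmod (exp_term m j s (of_real u)) \<le> cmod s ^ j / u ^ m"
proof -
  have "Re (- s / of_real u) \<le> 0"
    using assms by (simp add: Re_divide_of_real)
  then have "cmod (exp (- s / of_real u)) \<le> 1"
    by (simp add: norm_exp_eq_Re)
  then show ?thesis
    using assms by (auto simp: exp_term_def norm_mult norm_divide norm_power
        intro!: divide_right_mono mult_left_le)
qed

lemma norm_exp_poly_le:
  assumes "0 < u" "u \<le> cmod s" "Re s \<ge> 0"
  shows "cmod (exp_poly c a k s (of_real u))
           \<le> (\<bar>c\<bar> + (\<Sum>j\<le>k. \<bar>a j\<bar>)) * (cmod s ^ k / u ^ (2 * k + 1))"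
proof -
  let ?B = "cmod s ^ k / u ^ (2 * k + 1)"
  have "cmod (of_real c / of_real u ^ (k + 1)) = \<bar>c\<bar> * (cmod s ^ 0 / u ^ (k + 1 + 0))"
    using assms by (simp add: norm_divide norm_power norm_mult)
  also have "\<dots> \<le> \<bar>c\<bar> * ?B"
    using assms by (intro mult_left_mono power_div_power_mono) auto
  finally have const: "cmod (of_real c / of_real u ^ (k + 1)) \<le> \<bar>c\<bar> * ?B" .
  have summand: "cmod (of_real (a j) * exp_term (k + 1 + j) j s (of_real u)) \<le> \<bar>a j\<bar> * ?B"
    if "j \<le> k" for j
  proof -
    have "cmod (of_real (a j) * exp_term (k + 1 + j) j s (of_real u))
        \<le> \<bar>a j\<bar> * (cmod s ^ j / u ^ (k + 1 + j))"
      unfolding norm_mult norm_of_real using assms by (intro mult_left_mono norm_exp_term_le) auto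
    also have "\<dots> \<le> \<bar>a j\<bar> * ?B"
      using assms that by (intro mult_left_mono power_div_power_mono) auto
    finally show ?thesis .
  qed
  have "cmod (exp_poly c a k s (of_real u))
      \<le> cmod (of_real c / of_real u ^ (k + 1))
        + (\<Sum>j\<le>k. cmod (of_real (a j) * exp_term (k + 1 + j) j s (of_real u)))"
    unfolding exp_poly_def by (rule norm_triangle_le[OF add_left_mono[OF norm_sum]])
  also have "\<dots> \<le> \<bar>c\<bar> * ?B + (\<Sum>j\<le>k. \<bar>a j\<bar> * ?B)"
    using const summand by (intro add_mono sum_mono) auto
  also have "\<dots> = (\<bar>c\<bar> + (\<Sum>j\<le>k. \<bar>a j\<bar>)) * ?B"
    by (simp only: sum_distrib_right distrib_right)
  finally show ?thesis .
qed

theorem lemma8: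
  fixes \<nu> :: nat
  assumes "\<nu> \<ge> 1"
  shows "\<exists>C. \<forall>u s. u \<ge> 1 \<and> Re s = 1 \<and> cmod s > u \<longrightarrow>
           cmod (higher_vderiv \<nu> (\<lambda>x. G x s) u) \<le> C * cmod s ^ (\<nu> - 1) / u ^ (2 * \<nu> - 1)"
proof -
  obtain k where k: "\<nu> = Suc k"
    using assms by (cases \<nu>) auto
  obtain c a where ca: "\<And>s u. u > 0 \<Longrightarrow>
      higher_vderiv (Suc k) (\<lambda>x. G x s) u = exp_poly c a k s (of_real u)"
    using higher_vderiv_G_eq_exp_poly by blast
  have "cmod (higher_vderiv \<nu> (\<lambda>x. G x s) u)
      \<le> (\<bar>c\<bar> + (\<Sum>j\<le>k. \<bar>a j\<bar>)) * cmod s ^ (\<nu> - 1) / u ^ (2 * \<nu> - 1)"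
    if "u \<ge> 1" "Re s = 1" "cmod s > u" for u s
    using ca[of u s] norm_exp_poly_le[of u s c a k] that k by simp
  then show ?thesis by blast
qed

end
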